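(* Let $\Delta\in\mathfrak{gl}_n(A)$ be such that $\Phi$ is right compatible with $N$, let $\alpha\in\mathfrak{gl}_n(R)$ and let $u\in GL_n(R)$ satisfy $\delta u=\Delta^\alpha(u)$. Then $N^\delta\subset G_u$.
   Context: Let $p$ be an odd prime, $R$ the unique complete discrete valuation ring with maximal ideal $pR$ and residue field an algebraic closure of $\mathbb F_p$; $\phi$ the unique lift of Frobenius, $\delta a=(\phi(a)-a^p)/p$; on matrices $\phi,\delta$ act entrywise, $u^{(p)}=(u_{ij}^p)$. $x$ is an $n\times n$ matrix of indeterminates, $A=R[x,\det(x)^{-1}]^\wedge$. For $\Delta\in\mathfrak{gl}_n(A)$: $\Phi(x)=x^{(p)}+p\Delta(x)$, $\Delta^\alpha(x)=\alpha\Phi(x)+\Delta(x)$. $G_u=\{v\in GL_n(R):\phi(v)=\Phi(u)^{-1}\Phi(uv)\}$. $R^\delta=\{\lambda:\delta\lambda=0\}$. $T$: diagonal matrices in $GL_n(R)$; $W$: permutation matrices; $N=WT$; $N^\delta$: elements of $N$ with all entries in $R^\delta$. $\Phi$ is right compatible with $N$ if $\Phi(ac)=\Phi(a)c^{(p)}$ for all $a\in GL_n(R)$ and $c\in N$. *)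

theory Defs
  imports "HOL-Analysis.Analysis" "HOL-Computational_Algebra.Polynomial"
begin

text \<open>R is the unique (up to isomorphism) complete discrete valuation ring with maximal
ideal pR and residue field an algebraic closure of F_p; phi is the unique lift of Frobenius.
We quantify over all such (R, phi), which is equivalent to fixing the unique one.\<close>

definition dvr_max_p :: "nat \<Rightarrow> 'r::idom itself \<Rightarrow> bool" where
  "dvr_max_p p _ \<longleftrightarrow>
     (of_nat p :: 'r) \<noteq> 0 \<and> \<not> (of_nat p :: 'r) dvd 1 \<and>
     (\<forall>a::'r. a \<noteq> 0 \<longrightarrow> (\<exists>u k. u dvd 1 \<and> a = u * of_nat p ^ k))"

definition p_adically_complete :: "nat \<Rightarrow> 'r::idom itself \<Rightarrow> bool" where
  "p_adically_complete p _ \<longleftrightarrow>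
     (\<forall>s::nat \<Rightarrow> 'r.
        (\<forall>k. \<exists>M. \<forall>m\<ge>M. \<forall>m'\<ge>M. (of_nat p ^ k :: 'r) dvd (s m - s m'))
        \<longrightarrow> (\<exists>l. \<forall>k. \<exists>M. \<forall>m\<ge>M. (of_nat p ^ k :: 'r) dvd (s m - l)))"

definition residue_alg_closure_Fp :: "nat \<Rightarrow> 'r::idom itself \<Rightarrow> bool" where
  "residue_alg_closure_Fp p _ \<longleftrightarrow>
     (\<forall>f::'r poly. degree f \<ge> 1 \<and> lead_coeff f = 1 \<longrightarrow> (\<exists>x. (of_nat p :: 'r) dvd poly f x)) \<and>
     (\<forall>a::'r. \<exists>f::int poly. (\<exists>i. \<not> int p dvd coeff f i) \<and>
         (of_nat p :: 'r) dvd poly (map_poly of_int f) a)"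

definition frobenius_lift :: "nat \<Rightarrow> ('r::idom \<Rightarrow> 'r) \<Rightarrow> bool" where
  "frobenius_lift p \<phi> \<longleftrightarrow>
     \<phi> 1 = 1 \<and> (\<forall>a b. \<phi> (a + b) = \<phi> a + \<phi> b) \<and> (\<forall>a b. \<phi> (a * b) = \<phi> a * \<phi> b) \<and>
     (\<forall>a. (of_nat p :: 'r) dvd (\<phi> a - a ^ p))"

definition witt_setting :: "nat \<Rightarrow> ('r::idom \<Rightarrow> 'r) \<Rightarrow> bool" where
  "witt_setting p \<phi> \<longleftrightarrow> prime p \<and> odd p \<and>
     dvr_max_p p TYPE('r) \<and> p_adically_complete p TYPE('r) \<and>
     residue_alg_closure_Fp p TYPE('r) \<and> frobenius_lift p \<phi>"

definition pdelta :: "nat \<Rightarrow> ('r::idom \<Rightarrow> 'r) \<Rightarrow> 'r \<Rightarrow> 'r" where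
  "pdelta p \<phi> a = (THE b. of_nat p * b = \<phi> a - a ^ p)"

definition R_delta :: "nat \<Rightarrow> ('r::idom \<Rightarrow> 'r) \<Rightarrow> 'r set" where
  "R_delta p \<phi> = {a. pdelta p \<phi> a = 0}"

definition entrywise :: "('r \<Rightarrow> 'r) \<Rightarrow> 'r^'n^'n \<Rightarrow> 'r^'n^'n" where
  "entrywise f M = (\<chi> i j. f (M $ i $ j))"

definition ppow :: "nat \<Rightarrow> 'r::comm_ring_1^'n^'n \<Rightarrow> 'r^'n^'n" where
  "ppow p M = entrywise (\<lambda>a. a ^ p) M"

definition GL :: "('r::comm_ring_1^'n^'n) set" where
  "GL = {M. invertible M}"

definition det_inv :: "'r::comm_ring_1^'n::finite^'n \<Rightarrow> 'r" where
  "det_inv M = (THE y. det M * y = 1)"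

inductive_set poly_det_funs :: "('r::comm_ring_1^'n::finite^'n \<Rightarrow> 'r) set" where
  pf_const: "(\<lambda>x. c) \<in> poly_det_funs"
| pf_coord: "(\<lambda>x. x $ i $ j) \<in> poly_det_funs"
| pf_detinv: "det_inv \<in> poly_det_funs"
| pf_add: "f \<in> poly_det_funs \<Longrightarrow> g \<in> poly_det_funs \<Longrightarrow> (\<lambda>x. f x + g x) \<in> poly_det_funs"
| pf_mult: "f \<in> poly_det_funs \<Longrightarrow> g \<in> poly_det_funs \<Longrightarrow> (\<lambda>x. f x * g x) \<in> poly_det_funs"

text \<open>Elements of A, viewed through evaluation on GL_n(R): p-adic uniform limits of
elements of R[x, det(x)^-1].\<close>
definition in_A :: "nat \<Rightarrow> ('r::idom^'n::finite^'n \<Rightarrow> 'r) \<Rightarrow> bool" where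
  "in_A p f \<longleftrightarrow> (\<forall>k. \<exists>g \<in> poly_det_funs. \<forall>x. invertible x \<longrightarrow> (of_nat p ^ k :: 'r) dvd (f x - g x))"

definition gl_A :: "nat \<Rightarrow> ('r::idom^'n::finite^'n \<Rightarrow> 'r^'n^'n) \<Rightarrow> bool" where
  "gl_A p \<Delta> \<longleftrightarrow> (\<forall>i j. in_A p (\<lambda>x. \<Delta> x $ i $ j))"

definition PhiD :: "nat \<Rightarrow> ('r::comm_ring_1^'n^'n \<Rightarrow> 'r^'n^'n) \<Rightarrow> 'r^'n^'n \<Rightarrow> 'r^'n^'n" where
  "PhiD p \<Delta> x = (\<chi> i j. (x $ i $ j) ^ p + of_nat p * \<Delta> x $ i $ j)"

definition Delta_alpha :: "nat \<Rightarrow> ('r::comm_ring_1^'n::finite^'n \<Rightarrow> 'r^'n^'n) \<Rightarrow> 'r^'n^'n \<Rightarrow> 'r^'n^'n \<Rightarrow> 'r^'n^'n" where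
  "Delta_alpha p \<Delta> \<alpha> x = \<alpha> ** PhiD p \<Delta> x + \<Delta> x"

definition G_u :: "nat \<Rightarrow> ('r::idom \<Rightarrow> 'r) \<Rightarrow> ('r^'n::finite^'n \<Rightarrow> 'r^'n^'n) \<Rightarrow> 'r^'n^'n \<Rightarrow> ('r^'n^'n) set" where
  "G_u p \<phi> \<Delta> u = {v. invertible v \<and> entrywise \<phi> v = matrix_inv (PhiD p \<Delta> u) ** PhiD p \<Delta> (u ** v)}"

definition diag_T :: "('r::comm_ring_1^'n^'n) set" where
  "diag_T = {M. invertible M \<and> (\<forall>i j. i \<noteq> j \<longrightarrow> M $ i $ j = 0)}"

definition perm_W :: "('r::comm_ring_1^'n^'n) set" where
  "perm_W = {M. \<exists>\<sigma>. \<sigma> permutes (UNIV :: 'n set) \<and> M = (\<chi> i j. if j = \<sigma> i then 1 else 0)}"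

definition N_grp :: "('r::comm_ring_1^'n::finite^'n) set" where
  "N_grp = {w ** t | w t. w \<in> perm_W \<and> t \<in> diag_T}"

definition N_delta :: "nat \<Rightarrow> ('r::idom \<Rightarrow> 'r) \<Rightarrow> ('r^'n::finite^'n) set" where
  "N_delta p \<phi> = {c \<in> N_grp. \<forall>i j. c $ i $ j \<in> R_delta p \<phi>}"

definition right_compatible_N :: "nat \<Rightarrow> ('r::comm_ring_1^'n::finite^'n \<Rightarrow> 'r^'n^'n) \<Rightarrow> bool" where
  "right_compatible_N p \<Delta> \<longleftrightarrow>
     (\<forall>a c. invertible a \<longrightarrow> c \<in> N_grp \<longrightarrow> PhiD p \<Delta> (a ** c) = PhiD p \<Delta> a ** ppow p c)"

end

theory Submission
  imports Defs "HOL-Computational_Algebra.Polynomial_Factorial"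
begin

text \<open>For \<open>c \<in> N^\<delta>\<close> the entries of \<open>c\<close> satisfy \<open>\<phi>(a) = a^p\<close>, so \<open>\<phi>(c) = c^(p)\<close>, and right
compatibility gives \<open>\<Phi>(uc) = \<Phi>(u) c^(p) = \<Phi>(u) \<phi>(c)\<close>. It remains to see that \<open>\<Phi>(u)\<close> is invertible:
unfolding \<open>\<delta>u = \<alpha>\<Phi>(u) + \<Delta>(u)\<close> gives \<open>\<phi>(u) = (1 + p\<alpha>) \<Phi>(u)\<close>, and \<open>\<phi>(u)\<close> is invertible because
\<open>\<phi>\<close> is a ring endomorphism. So \<open>\<Phi>(u)\<close> has a left inverse, which over a domain makes it
invertible (pass to the field of fractions). That \<open>\<Delta>\<close> has entries in \<open>A\<close> is not needed.\<close>

definition map_matrix :: "('a \<Rightarrow> 'b) \<Rightarrow> 'a^'n^'m \<Rightarrow> 'b^'n^'m" where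
  "map_matrix f M = (\<chi> i j. f (M $ i $ j))"

lemma entrywise_eq_map_matrix: "entrywise f = map_matrix f"
  by (simp add: fun_eq_iff entrywise_def map_matrix_def)

lemma map_matrix_mult:
  fixes f :: "'a::semiring_1 \<Rightarrow> 'b::semiring_1"
  assumes "f 0 = 0" and "\<And>a b. f (a + b) = f a + f b" and "\<And>a b. f (a * b) = f a * f b"
  shows "map_matrix f ((A::'a^'k^'m) ** (B::'a^'n^'k)) = map_matrix f A ** map_matrix f B"
  by (simp add: map_matrix_def matrix_matrix_mult_def vec_eq_iff assms(3)
      flip: sum_comp_morphism[of f, OF assms(1,2)])

lemma map_matrix_mat:
  assumes "f 0 = 0"
  shows "map_matrix f (mat a :: 'a::zero^'n^'n) = mat (f a)"
  using assms by (simp add: map_matrix_def mat_def vec_eq_iff)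

lemma map_matrix_inject:
  assumes "inj f" and "map_matrix f A = map_matrix f B"
  shows "A = B"
  using assms by (auto simp: map_matrix_def vec_eq_iff inj_eq)

lemma invertible_map_matrix:
  fixes f :: "'a::semiring_1 \<Rightarrow> 'b::semiring_1"
  assumes "f 0 = 0" and "f 1 = 1"
    and "\<And>a b. f (a + b) = f a + f b" and "\<And>a b. f (a * b) = f a * f b"
    and "invertible (A::'a^'n^'n)"
  shows "invertible (map_matrix f A)"
proof -
  obtain B where "A ** B = mat 1" and "B ** A = mat 1"
    using assms(5) by (auto simp: invertible_def)
  then show ?thesis
    unfolding invertible_def
    by (metis assms(1-4) map_matrix_mult map_matrix_mat)
qed

lemma matrix_left_right_inverse_idom:
  fixes A B :: "'a::idom^'n^'n"
  assumes "B ** A = mat 1"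
  shows "A ** B = mat 1"
proof -
  note to_fract_map_matrix_mult =
    map_matrix_mult[of to_fract, OF to_fract_0 to_fract_add to_fract_mult]
  have "map_matrix to_fract B ** map_matrix to_fract A = mat 1"
    using arg_cong[OF assms, of "map_matrix to_fract"]
    by (simp add: to_fract_map_matrix_mult map_matrix_mat)
  then have "map_matrix to_fract (A ** B) = map_matrix to_fract (mat 1)"
    by (simp add: to_fract_map_matrix_mult map_matrix_mat matrix_left_right_inverse)
  then show ?thesis
    by (rule map_matrix_inject[rotated]) (simp add: inj_on_def)
qed

lemma invertible_left_inverse_idom:
  fixes A :: "'a::idom^'n^'n"
  shows "invertible A \<longleftrightarrow> (\<exists>B. B ** A = mat 1)"
  by (metis invertible_def matrix_left_right_inverse_idom)

lemma invertible_right_factor_idom: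
  fixes A B :: "'a::idom^'n^'n"
  assumes "invertible (A ** B)"
  shows "invertible B"
  using assms by (metis invertible_def invertible_left_inverse_idom matrix_mul_assoc)

lemma matrix_inv_left:
  assumes "invertible A"
  shows "matrix_inv A ** A = mat 1"
  using assms unfolding invertible_def matrix_inv_def by (metis (mono_tags, lifting) someI_ex)

lemma permutation_matrix_mult:
  fixes A :: "'a::semiring_1^'m^'n"
  shows "(\<chi> i j. if j = \<tau> i then 1 else 0) ** A = (\<chi> i. A $ \<tau> i)"
  by (simp add: matrix_matrix_mult_def vec_eq_iff if_distrib if_distribR sum.delta cong: if_cong)

lemma invertible_permutation_matrix:
  assumes "\<sigma> permutes (UNIV :: 'n::finite set)"
  shows "invertible ((\<chi> i j. if j = \<sigma> i then 1 else 0) :: 'a::idom^'n^'n)"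
  unfolding invertible_left_inverse_idom
proof
  show "(\<chi> i j. if j = inv \<sigma> i then 1 else 0) ** ((\<chi> i j. if j = \<sigma> i then 1 else 0) :: 'a^'n^'n)
      = mat 1"
    using assms by (simp add: permutation_matrix_mult vec_eq_iff mat_def permutes_inverses(1) eq_commute)
qed

lemma N_grp_invertible:
  assumes "(c :: 'a::idom^'n::finite^'n) \<in> N_grp"
  shows "invertible c"
  using assms unfolding N_grp_def perm_W_def diag_T_def
  by (auto intro!: invertible_mult invertible_permutation_matrix)

lemma frobenius_lift_hom:
  assumes "frobenius_lift p \<phi>"
  shows "\<phi> 0 = 0" and "\<phi> 1 = 1"
    and "\<phi> (a + b) = \<phi> a + \<phi> b" and "\<phi> (a * b) = \<phi> a * \<phi> b"
  using assms unfolding frobenius_lift_def by (metis add_cancel_right_right add_0)+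

lemma frobenius_lift_pdelta:
  fixes \<phi> :: "'r::idom \<Rightarrow> 'r"
  assumes "frobenius_lift p \<phi>" and "(of_nat p :: 'r) \<noteq> 0"
  shows "of_nat p * pdelta p \<phi> a = \<phi> a - a ^ p"
proof -
  obtain b where b: "\<phi> a - a ^ p = of_nat p * b"
    using assms(1) unfolding frobenius_lift_def by (meson dvdE)
  have "of_nat p * (THE b. of_nat p * b = \<phi> a - a ^ p) = \<phi> a - a ^ p"
    by (rule theI[of _ b]) (use b assms(2) in auto)
  then show ?thesis by (simp add: pdelta_def)
qed

lemma frobenius_N_delta:
  assumes "\<And>a. of_nat p * pdelta p \<phi> a = \<phi> a - a ^ p"
    and "c \<in> N_delta p \<phi>"
  shows "entrywise \<phi> c = ppow p c"
proof -
  have "\<phi> (c $ i $ j) = c $ i $ j ^ p" for i j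
    using assms(1)[of "c $ i $ j"] assms(2) by (simp add: N_delta_def R_delta_def)
  then show ?thesis by (simp add: entrywise_def ppow_def vec_eq_iff)
qed

lemma frobenius_of_delta_solution:
  fixes \<phi> :: "'r::idom \<Rightarrow> 'r"
  assumes "\<And>a. of_nat p * pdelta p \<phi> a = \<phi> a - a ^ p"
    and "entrywise (pdelta p \<phi>) u = Delta_alpha p \<Delta> \<alpha> u"
  shows "entrywise \<phi> u = (mat 1 + mat (of_nat p) ** \<alpha>) ** PhiD p \<Delta> u"
proof -
  have "\<phi> (u $ i $ j) = u $ i $ j ^ p + of_nat p * ((\<alpha> ** PhiD p \<Delta> u) $ i $ j + \<Delta> u $ i $ j)"
    for i j
    using assms(1)[of "u $ i $ j"] arg_cong[OF assms(2), of "\<lambda>M. M $ i $ j"]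
    by (simp add: entrywise_def Delta_alpha_def algebra_simps)
  then have "entrywise \<phi> u = PhiD p \<Delta> u + mat (of_nat p) ** (\<alpha> ** PhiD p \<Delta> u)"
    by (simp add: entrywise_def PhiD_def vec_eq_iff matrix_matrix_mult_def mat_def
        if_distrib if_distribR sum.delta algebra_simps cong: if_cong)
  moreover have "(A + B) ** C = A ** C + B ** C" for A B C :: "'r^'n^'n"
    by (simp add: matrix_matrix_mult_def vec_eq_iff distrib_right sum.distrib)
  ultimately show ?thesis
    by (metis matrix_mul_assoc matrix_mul_lid)
qed

lemma G_u_memI:
  assumes "invertible (PhiD p \<Delta> u)" and "invertible v"
    and "PhiD p \<Delta> (u ** v) = PhiD p \<Delta> u ** entrywise \<phi> v"
  shows "v \<in> G_u p \<phi> \<Delta> u"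
  using assms by (simp add: G_u_def matrix_mul_assoc matrix_inv_left)

theorem lemma3p4:
  fixes p :: nat and \<phi> :: "'r::idom \<Rightarrow> 'r"
    and \<Delta> :: "'r^'n::finite^'n \<Rightarrow> 'r^'n^'n" and \<alpha> u :: "'r^'n^'n"
  assumes "witt_setting p \<phi>"
    and "gl_A p \<Delta>"
    and "right_compatible_N p \<Delta>"
    and "invertible u"
    and "entrywise (pdelta p \<phi>) u = Delta_alpha p \<Delta> \<alpha> u"
  shows "N_delta p \<phi> \<subseteq> G_u p \<phi> \<Delta> u"
proof
  have frob: "frobenius_lift p \<phi>" and p_nonzero: "(of_nat p :: 'r) \<noteq> 0"
    using assms(1) by (simp_all add: witt_setting_def dvr_max_p_def)
  note pdelta = frobenius_lift_pdelta[OF frob p_nonzero]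
  have "invertible (entrywise \<phi> u)"
    unfolding entrywise_eq_map_matrix
    using invertible_map_matrix[OF frobenius_lift_hom[OF frob] assms(4)] .
  then have Phi_invertible: "invertible (PhiD p \<Delta> u)"
    unfolding frobenius_of_delta_solution[OF pdelta assms(5)]
    by (rule invertible_right_factor_idom)
  fix c :: "'r^'n^'n" assume c: "c \<in> N_delta p \<phi>"
  then have "c \<in> N_grp" by (simp add: N_delta_def)
  then have "invertible c" and "PhiD p \<Delta> (u ** c) = PhiD p \<Delta> u ** ppow p c"
    using assms(3,4) by (simp_all add: N_grp_invertible right_compatible_N_def)
  with Phi_invertible show "c \<in> G_u p \<phi> \<Delta> u"
    by (simp add: G_u_memI frobenius_N_delta[OF pdelta c])
qed

end
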